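(* Let $c\ge 1$ be an integer and $f(x_1,\dots,x_c)$ a multivariate polynomial with non-negative coefficients that is recursive-dependent and has a positive real fixed point $C$, i.e. $C=f(C,\dots,C)$ with $C>0$. Let $\mathcal{F}=\bigsqcup_{h\ge0}\mathcal{F}_h$ be a combinatorial class decomposed into finite subclasses whose generating functions $F_h(z)$ are non-constant polynomials with non-negative coefficients satisfying \[F_h(z)=f\bigl(F_{h-1}(z),F_{h-2}(z),\dots,F_{h-c}(z)\bigr)\quad\text{for all } h\ge c,\] and for each $h\ge0$ let $\alpha_h$ be the unique positive real solution of $F_h(z)=C$; the limit $\alpha=\lim_{h\to\infty}\alpha_h$ exists. Let $a_n$ be the number of objects of $\mathcal{F}$ of size $n$, i.e. the coefficient of $z^n$ in $F(z)=\sum_{h\ge0}F_h(z)$. Then \[a_n=\alpha^{-n}\,\theta(n)\] for a function $\theta$ growing at most sub-exponentially, i.e. $\theta(n)=o(\kappa^n)$ for every $\kappa>1$.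
   Context: The polynomial $f$ is called recursive-dependent if there is a constant $k$ (depending only on $f$) such that for any indices $i,j\ge c$ with $i\ge j+k$, there is a sequence of applications of the recurrence $F_h=f(F_{h-1},\dots,F_{h-c})$ (repeatedly substituting it for terms $F_h$ with $h\ge c$) resulting in a polynomial $P$ with $F_i=P(F_{\ell_1},\dots,F_{\ell_m})$ for some indices $0\le\ell_1<\dots<\ell_m\le i$ such that $\partial P/\partial F_j\neq 0$ (i.e. $F_j$ is among the $F_{\ell_r}$ and $P$ genuinely depends on it). *)

theory Defs
  imports Complex_Main "HOL-Computational_Algebra.Polynomial" "HOL-Library.Landau_Symbols"
begin

text \<open>A multivariate polynomial f(x_1,...,x_c) with real coefficients is represented by its
coefficient function cf on exponent vectors e :: nat => nat (e i = exponent of x_i).\<close>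

definition mpoly_wf :: "nat \<Rightarrow> ((nat \<Rightarrow> nat) \<Rightarrow> real) \<Rightarrow> bool" where
  "mpoly_wf c cf \<longleftrightarrow> finite {e. cf e \<noteq> 0} \<and>
     (\<forall>e. cf e \<noteq> 0 \<longrightarrow> (\<forall>i. i \<notin> {1..c} \<longrightarrow> e i = 0))"

definition mpoly_nonneg :: "((nat \<Rightarrow> nat) \<Rightarrow> real) \<Rightarrow> bool" where
  "mpoly_nonneg cf \<longleftrightarrow> (\<forall>e. cf e \<ge> 0)"

definition feval :: "nat \<Rightarrow> ((nat \<Rightarrow> nat) \<Rightarrow> real) \<Rightarrow> (nat \<Rightarrow> real) \<Rightarrow> real" where
  "feval c cf x = (\<Sum>e\<in>{e. cf e \<noteq> 0}. cf e * (\<Prod>i\<in>{1..c}. x i ^ e i))"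

text \<open>Expressions obtained from F_i by repeatedly applying the recurrence
F_h = f(F_{h-1},...,F_{h-c}) (h >= c).  An expression is a polynomial function of the
variables F_0, F_1, ...; a valuation is x :: nat => real (x l = value of F_l).\<close>

inductive expansion :: "nat \<Rightarrow> ((nat \<Rightarrow> nat) \<Rightarrow> real) \<Rightarrow> nat \<Rightarrow> ((nat \<Rightarrow> real) \<Rightarrow> real) \<Rightarrow> bool"
  for c cf i where
  start: "expansion c cf i (\<lambda>x. x i)"
| subst: "expansion c cf i P \<Longrightarrow> h \<ge> c \<Longrightarrow>
     expansion c cf i (\<lambda>x. P (x(h := feval c cf (\<lambda>a. x (h - a)))))"

text \<open>P genuinely depends on F_j (i.e. dP/dF_j is not the zero polynomial).\<close>
definition depends_on :: "((nat \<Rightarrow> real) \<Rightarrow> real) \<Rightarrow> nat \<Rightarrow> bool" where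
  "depends_on P j \<longleftrightarrow> (\<exists>x t. P (x(j := t)) \<noteq> P x)"

definition recursive_dependent :: "nat \<Rightarrow> ((nat \<Rightarrow> nat) \<Rightarrow> real) \<Rightarrow> bool" where
  "recursive_dependent c cf \<longleftrightarrow>
     (\<exists>k::nat. \<forall>i j. j \<ge> c \<longrightarrow> i \<ge> j + k \<longrightarrow>
        (\<exists>P. expansion c cf i P \<and> depends_on P j))"

end

theory Submission imports Defs begin

text \<open>Since every F_h has non-negative integer coefficients and only finitely many F_h
have a non-zero coefficient in any given degree, comparing lowest-order terms in the
recurrence shows that f has neither a constant nor a linear monomial. Hence f is quadratically
small near 0, so for a small z > 0 the values F_h(z) decay geometrically in h. This yields
\<alpha> \<ge> z > 0 and shows that the objects of size n lie in only O(n) of the classes F_h. Each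
of these classes contributes at most C \<alpha>_h^-n objects and \<alpha>_h \<rightarrow> \<alpha>, so a_n \<alpha>^n grows
subexponentially.\<close>

lemma coeff_mult_power_le_poly:
  fixes p :: "real poly"
  assumes nonneg: "\<And>k. 0 \<le> coeff p k" and z: "0 \<le> z"
  shows "coeff p n * z ^ n \<le> poly p z"
proof (cases "n \<le> degree p")
  case True
  have "coeff p n * z ^ n \<le> (\<Sum>i\<le>degree p. coeff p i * z ^ i)"
    by (rule member_le_sum) (use True nonneg z in auto)
  then show ?thesis by (simp add: poly_altdef)
next
  case False
  then have "coeff p n = 0" by (simp add: coeff_eq_0)
  moreover have "0 \<le> (\<Sum>i\<le>degree p. coeff p i * z ^ i)"
    by (rule sum_nonneg) (use nonneg z in auto)
  ultimately show ?thesis by (simp add: poly_altdef)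
qed

lemma poly_nonneg_of_nonneg_coeffs:
  fixes p :: "real poly"
  assumes "\<And>k. 0 \<le> coeff p k" and "0 \<le> z"
  shows "0 \<le> poly p z"
  unfolding poly_altdef by (rule sum_nonneg) (use assms in auto)

lemma poly_mono_of_nonneg_coeffs:
  fixes p :: "real poly"
  assumes "\<And>k. 0 \<le> coeff p k" and "0 \<le> x" "x \<le> y"
  shows "poly p x \<le> poly p y"
  unfolding poly_altdef
  by (rule sum_mono) (use assms in \<open>auto intro!: mult_left_mono power_mono\<close>)

lemma poly_le_poly_one_mult_power:
  fixes p :: "real poly"
  assumes nonneg: "\<And>k. 0 \<le> coeff p k" and low: "\<And>k. k < v \<Longrightarrow> coeff p k = 0"
    and z: "0 \<le> z" "z \<le> 1"
  shows "poly p z \<le> poly p 1 * z ^ v"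
proof -
  have "poly p z = (\<Sum>i\<le>degree p. coeff p i * z ^ i)" by (simp add: poly_altdef)
  also have "\<dots> \<le> (\<Sum>i\<le>degree p. coeff p i * z ^ v)"
  proof (rule sum_mono)
    fix i
    show "coeff p i * z ^ i \<le> coeff p i * z ^ v"
    proof (cases "i < v")
      case False
      then have "z ^ i \<le> z ^ v" using z by (intro power_decreasing) auto
      then show ?thesis using nonneg by (intro mult_left_mono) auto
    qed (use low in simp)
  qed
  also have "\<dots> = poly p 1 * z ^ v" by (simp add: poly_altdef sum_distrib_right)
  finally show ?thesis .
qed

definition lowest_degree :: "'a::zero poly \<Rightarrow> nat" where
  "lowest_degree p = (LEAST n. coeff p n \<noteq> 0)"

lemma coeff_lowest_degree_neq_0: "p \<noteq> 0 \<Longrightarrow> coeff p (lowest_degree p) \<noteq> 0"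
  unfolding lowest_degree_def by (rule LeastI_ex) (auto simp: poly_eq_iff)

lemma coeff_less_lowest_degree: "n < lowest_degree p \<Longrightarrow> coeff p n = 0"
  unfolding lowest_degree_def using not_less_Least by blast

lemma monomial_le_feval:
  assumes "mpoly_wf c cf" and "mpoly_nonneg cf" and "\<And>i. 0 \<le> x i" and "cf e \<noteq> 0"
  shows "cf e * (\<Prod>i\<in>{1..c}. x i ^ e i) \<le> feval c cf x"
  unfolding feval_def
  by (rule member_le_sum)
    (use assms in \<open>auto simp: mpoly_wf_def mpoly_nonneg_def intro!: mult_nonneg_nonneg prod_nonneg\<close>)

lemma feval_nonneg:
  assumes "mpoly_nonneg cf" and "\<And>i. 0 \<le> x i"
  shows "0 \<le> feval c cf x"
  unfolding feval_def
  by (rule sum_nonneg) (use assms in \<open>auto simp: mpoly_nonneg_def intro!: mult_nonneg_nonneg prod_nonneg\<close>)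

lemma feval_le_feval_one_mult_square:
  assumes "mpoly_nonneg cf"
    and x: "\<And>i. i \<in> {1..c} \<Longrightarrow> 0 \<le> x i \<and> x i \<le> M" and M: "0 \<le> M" "M \<le> 1"
    and quadratic: "\<And>e. cf e \<noteq> 0 \<Longrightarrow> 2 \<le> (\<Sum>i\<in>{1..c}. e i)"
  shows "feval c cf x \<le> feval c cf (\<lambda>_. 1) * M\<^sup>2"
  unfolding feval_def power_one prod.neutral_const mult_1_right sum_distrib_right
proof (rule sum_mono)
  fix e assume "e \<in> {e. cf e \<noteq> 0}"
  have "(\<Prod>i\<in>{1..c}. x i ^ e i) \<le> (\<Prod>i\<in>{1..c}. M ^ e i)"
    by (rule prod_mono) (use x in \<open>auto intro: power_mono\<close>)
  also have "\<dots> = M ^ (\<Sum>i\<in>{1..c}. e i)" by (simp add: power_sum)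
  also have "\<dots> \<le> M\<^sup>2" using quadratic \<open>e \<in> _\<close> M by (intro power_decreasing) auto
  finally show "cf e * (\<Prod>i\<in>{1..c}. x i ^ e i) \<le> cf e * M\<^sup>2"
    using \<open>mpoly_nonneg cf\<close> by (intro mult_left_mono) (auto simp: mpoly_nonneg_def)
qed

lemma mpoly_monomial_degree_ge_2:
  assumes wf: "mpoly_wf c cf" and no_const: "cf (\<lambda>_. 0) = 0"
    and no_linear: "\<And>i. i \<in> {1..c} \<Longrightarrow> cf (\<lambda>j. if j = i then 1 else 0) = 0"
    and e: "cf e \<noteq> 0"
  shows "2 \<le> (\<Sum>i\<in>{1..c}. e i)"
proof (rule ccontr)
  have outside: "e j = 0" if "j \<notin> {1..c}" for j using wf e that by (auto simp: mpoly_wf_def)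
  assume "\<not> 2 \<le> (\<Sum>i\<in>{1..c}. e i)"
  then consider "(\<Sum>i\<in>{1..c}. e i) = 0" | "(\<Sum>i\<in>{1..c}. e i) = 1" by linarith
  then show False
  proof cases
    case 1
    then have "e = (\<lambda>_. 0)" using outside by (auto simp: fun_eq_iff)
    then show False using e no_const by simp
  next
    case 2
    then obtain i where "i \<in> {1..c}" "e i = 1" and others: "\<forall>j\<in>{1..c}. j \<noteq> i \<longrightarrow> e j = 0"
      using 2 sum_eq_1_iff[of "{1..c}" e] by auto
    then have "e = (\<lambda>j. if j = i then 1 else 0)" using outside by (auto simp: fun_eq_iff)
    then show False using e no_linear \<open>i \<in> {1..c}\<close> by simp
  qed
qed

lemma linear_times_power_smallo:
  fixes A B \<rho> \<kappa> :: real
  assumes "0 \<le> \<rho>" "\<rho> < \<kappa>"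
  shows "(\<lambda>n. (A + B * real n) * \<rho> ^ n) \<in> o(\<lambda>n. \<kappa> ^ n)"
proof (rule smalloI_tendsto)
  have r: "norm (\<rho> / \<kappa>) < 1" using assms by simp
  have "(\<lambda>n. A * (\<rho> / \<kappa>) ^ n + B * (real n * (\<rho> / \<kappa>) ^ n)) \<longlonglongrightarrow> A * 0 + B * 0"
    by (intro tendsto_intros LIMSEQ_power_zero powser_times_n_limit_0 r)
  moreover have "(A + B * real n) * \<rho> ^ n / \<kappa> ^ n
      = A * (\<rho> / \<kappa>) ^ n + B * (real n * (\<rho> / \<kappa>) ^ n)" for n
    by (simp add: power_divide ring_distribs add_divide_distrib)
  ultimately show "(\<lambda>n. (A + B * real n) * \<rho> ^ n / \<kappa> ^ n) \<longlonglongrightarrow> 0"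
    by simp
qed (use assms in simp)

text \<open>For large n only classes with \<alpha>_h > \<alpha>/\<rho> have objects of size n, and each of them has
  at most C (\<rho>/\<alpha>)^n of them.\<close>
lemma coeff_sum_times_power_smallo:
  fixes F :: "nat \<Rightarrow> real poly" and alpha :: "nat \<Rightarrow> real" and A B :: nat
  assumes nonneg: "\<And>h k. 0 \<le> coeff (F h) k"
    and card: "\<And>n. card {h. coeff (F h) n \<noteq> 0} \<le> A + B * n"
    and alpha_pos: "\<And>h. 0 < alpha h" and alpha_root: "\<And>h. poly (F h) (alpha h) \<le> C"
    and alpha_lim: "alpha \<longlonglongrightarrow> \<alpha>" and "0 < \<alpha>" and "1 < \<kappa>"
  shows "(\<lambda>n. (\<Sum>h\<in>{h. coeff (F h) n \<noteq> 0}. coeff (F h) n) * \<alpha> ^ n) \<in> o(\<lambda>n. \<kappa> ^ n)"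
proof -
  define \<rho> where "\<rho> = (1 + \<kappa>) / 2"
  define \<beta> where "\<beta> = \<alpha> / \<rho>"
  have \<rho>: "1 < \<rho>" "\<rho> < \<kappa>" using \<open>1 < \<kappa>\<close> by (auto simp: \<rho>_def)
  have \<beta>: "0 < \<beta>" "\<beta> < \<alpha>" using \<rho> \<open>0 < \<alpha>\<close> by (auto simp: \<beta>_def divide_less_eq)
  obtain H where H: "\<And>h. H \<le> h \<Longrightarrow> \<beta> < alpha h"
    using order_tendstoD(1)[OF alpha_lim \<open>\<beta> < \<alpha>\<close>] by (auto simp: eventually_sequentially)
  have "0 \<le> C"
    using poly_nonneg_of_nonneg_coeffs[OF nonneg less_imp_le[OF alpha_pos]] alpha_root
    by (meson order_trans)
  have coeff_le: "coeff (F h) n \<le> C / \<beta> ^ n" if "H \<le> h" for h n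
  proof -
    have "coeff (F h) n * \<beta> ^ n \<le> coeff (F h) n * alpha h ^ n"
      using H[OF that] \<beta> nonneg by (intro mult_left_mono power_mono) auto
    also have "\<dots> \<le> C"
      using coeff_mult_power_le_poly[OF nonneg less_imp_le[OF alpha_pos]] alpha_root
      by (meson order_trans)
    finally show ?thesis using \<beta> by (simp add: pos_le_divide_eq)
  qed
  have "\<forall>\<^sub>F n in sequentially. \<forall>h\<in>{..<H}. coeff (F h) n = 0"
    by (intro eventually_ball_finite ballI eventually_mono[OF eventually_gt_at_top] coeff_eq_0) auto
  then have "\<forall>\<^sub>F n in sequentially.
      norm ((\<Sum>h\<in>{h. coeff (F h) n \<noteq> 0}. coeff (F h) n) * \<alpha> ^ n)
        \<le> C * norm ((real A + real B * real n) * \<rho> ^ n)"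
  proof eventually_elim
    case (elim n)
    have "(\<Sum>h\<in>{h. coeff (F h) n \<noteq> 0}. coeff (F h) n)
        \<le> real (card {h. coeff (F h) n \<noteq> 0}) * (C / \<beta> ^ n)"
      by (rule sum_bounded_above) (use elim coeff_le in \<open>force simp: not_le\<close>)
    also have "\<dots> \<le> (real A + real B * real n) * (C / \<beta> ^ n)"
      using card[of n] \<open>0 \<le> C\<close> \<beta> by (intro mult_right_mono) (auto simp flip: of_nat_mult of_nat_add)
    finally have "(\<Sum>h\<in>{h. coeff (F h) n \<noteq> 0}. coeff (F h) n) * \<alpha> ^ n
        \<le> (real A + real B * real n) * (C / \<beta> ^ n) * \<alpha> ^ n"
      using \<open>0 < \<alpha>\<close> by (intro mult_right_mono) auto
    also have "\<dots> = C * ((real A + real B * real n) * \<rho> ^ n)"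
      using \<rho> \<open>0 < \<alpha>\<close> by (simp add: \<beta>_def power_divide field_simps)
    finally show ?case
      using \<rho> \<open>0 < \<alpha>\<close> nonneg by (simp add: sum_nonneg)
  qed
  then have "(\<lambda>n. (\<Sum>h\<in>{h. coeff (F h) n \<noteq> 0}. coeff (F h) n) * \<alpha> ^ n)
      \<in> O(\<lambda>n. (real A + real B * real n) * \<rho> ^ n)"
    by (rule bigoI)
  then show ?thesis
    by (rule landau_o.big_small_trans) (use linear_times_power_smallo \<rho> in auto)
qed

locale recursive_poly_classes =
  fixes c :: nat and cf :: "(nat \<Rightarrow> nat) \<Rightarrow> real" and F :: "nat \<Rightarrow> real poly"
  assumes c_pos: "1 \<le> c"
    and f_wf: "mpoly_wf c cf" and f_nonneg: "mpoly_nonneg cf"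
    and F_nat: "\<And>h n. coeff (F h) n \<in> \<nat>"
    and F_nonzero: "\<And>h. F h \<noteq> 0"
    and F_rec: "\<And>h z. c \<le> h \<Longrightarrow> poly (F h) z = feval c cf (\<lambda>i. poly (F (h - i)) z)"
    and class_fin: "\<And>n. finite {h. coeff (F h) n \<noteq> 0}"
begin

lemma coeff_nonneg: "0 \<le> coeff (F h) n"
  using F_nat[of h n] by (auto elim!: Nats_cases)

lemma coeff_ge_1: "coeff (F h) n \<noteq> 0 \<Longrightarrow> 1 \<le> coeff (F h) n"
  using F_nat[of h n] by (auto elim!: Nats_cases)

lemma poly_nonneg: "0 \<le> z \<Longrightarrow> 0 \<le> poly (F h) z"
  by (rule poly_nonneg_of_nonneg_coeffs[OF coeff_nonneg])

lemma power_lowest_degree_le_poly: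
  assumes "0 \<le> z"
  shows "z ^ lowest_degree (F h) \<le> poly (F h) z"
proof -
  have "z ^ lowest_degree (F h) \<le> coeff (F h) (lowest_degree (F h)) * z ^ lowest_degree (F h)"
    using coeff_ge_1[OF coeff_lowest_degree_neq_0[OF F_nonzero]] assms
    by (simp add: mult_le_cancel_right1)
  also have "\<dots> \<le> poly (F h) z" by (rule coeff_mult_power_le_poly[OF coeff_nonneg assms])
  finally show ?thesis .
qed

text \<open>For small z the monomial e gives F_h(z) \<ge> cf e z^s, while F_h(z) \<le> F_h(1) z^v with v the
  lowest degree of F_h; so v \<le> s.\<close>
lemma lowest_degree_le_monomial:
  assumes h: "c \<le> h" and e: "cf e \<noteq> 0"
  shows "lowest_degree (F h) \<le> (\<Sum>i\<in>{1..c}. e i * lowest_degree (F (h - i)))" (is "_ \<le> ?s")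
proof (rule ccontr)
  assume "\<not> ?thesis"
  then have s_less: "?s + 1 \<le> lowest_degree (F h)" by simp
  define S where "S = poly (F h) 1"
  have "1 \<le> S" using power_lowest_degree_le_poly[of 1 h] by (simp add: S_def)
  have "0 < cf e" using e f_nonneg by (auto simp: mpoly_nonneg_def less_le)
  define z where "z = min 1 (cf e / (2 * S))"
  have z: "0 < z" "z \<le> 1" "S * z \<le> cf e / 2"
    using \<open>1 \<le> S\<close> \<open>0 < cf e\<close> by (auto simp: z_def min_def field_simps)
  have "cf e * z ^ ?s = cf e * (\<Prod>i\<in>{1..c}. (z ^ lowest_degree (F (h - i))) ^ e i)"
    by (simp add: power_sum power_mult[symmetric] mult.commute)
  also have "\<dots> \<le> cf e * (\<Prod>i\<in>{1..c}. poly (F (h - i)) z ^ e i)"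
    using \<open>0 < cf e\<close> z
    by (intro mult_left_mono prod_mono conjI power_mono power_lowest_degree_le_poly) auto
  also have "\<dots> \<le> feval c cf (\<lambda>i. poly (F (h - i)) z)"
    using monomial_le_feval[OF f_wf f_nonneg poly_nonneg e] z by simp
  also have "\<dots> = poly (F h) z" using F_rec[OF h] by simp
  also have "\<dots> \<le> S * z ^ lowest_degree (F h)" unfolding S_def
    by (rule poly_le_poly_one_mult_power[OF coeff_nonneg coeff_less_lowest_degree]) (use z in auto)
  also have "\<dots> \<le> S * z ^ (?s + 1)"
    using s_less z \<open>1 \<le> S\<close> by (intro mult_left_mono power_decreasing) auto
  also have "\<dots> = (S * z) * z ^ ?s" by simp
  also have "\<dots> \<le> (cf e / 2) * z ^ ?s" using z by (intro mult_right_mono) auto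
  finally show False using z \<open>0 < cf e\<close> by (simp add: mult_le_cancel_right)
qed

lemma no_constant_term: "cf (\<lambda>_. 0) = 0"
proof (rule ccontr)
  assume const: "cf (\<lambda>_. 0) \<noteq> 0"
  have "coeff (F h) 0 \<noteq> 0" if "c \<le> h" for h
    using lowest_degree_le_monomial[OF that const] coeff_lowest_degree_neq_0[OF F_nonzero, of h]
    by simp
  then have "{c..} \<subseteq> {h. coeff (F h) 0 \<noteq> 0}" by auto
  then show False using class_fin[of 0] infinite_Ici[of c] finite_subset by blast
qed

lemma no_linear_term:
  assumes i: "i \<in> {1..c}"
  shows "cf (\<lambda>j. if j = i then 1 else 0) = 0"
proof (rule ccontr)
  assume linear: "cf (\<lambda>j. if j = i then 1 else 0) \<noteq> 0"
  have step: "lowest_degree (F h) \<le> lowest_degree (F (h - i))" if "c \<le> h" for h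
  proof -
    have "lowest_degree (F h)
        \<le> (\<Sum>j\<in>{1..c}. (if j = i then 1 else 0) * lowest_degree (F (h - j)))"
      by (rule lowest_degree_le_monomial[OF that linear])
    also have "\<dots> = (\<Sum>j\<in>{1..c}. if j = i then lowest_degree (F (h - j)) else 0)"
      by (rule sum.cong) auto
    also have "\<dots> = lowest_degree (F (h - i))" using i by simp
    finally show ?thesis .
  qed
  have bounded: "lowest_degree (F (c + m * i)) \<le> lowest_degree (F c)" for m
  proof (induction m)
    case (Suc m)
    have "c + Suc m * i - i = c + m * i" by simp
    then show ?case using step[of "c + Suc m * i"] Suc by simp
  qed simp
  have "range (\<lambda>m. c + m * i) \<subseteq> (\<Union>n\<le>lowest_degree (F c). {h. coeff (F h) n \<noteq> 0})"
    using bounded coeff_lowest_degree_neq_0[OF F_nonzero] by fastforce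
  moreover have "finite (\<Union>n\<le>lowest_degree (F c). {h. coeff (F h) n \<noteq> 0})"
    using class_fin by simp
  moreover have "infinite (range (\<lambda>m. c + m * i))"
    using i by (intro range_inj_infinite) (auto simp: inj_on_def)
  ultimately show False using finite_subset by blast
qed

lemma monomial_degree_ge_2: "cf e \<noteq> 0 \<Longrightarrow> 2 \<le> (\<Sum>i\<in>{1..c}. e i)"
  by (rule mpoly_monomial_degree_ge_2[OF f_wf no_constant_term no_linear_term])

lemma poly_le_half:
  assumes h: "c \<le> h" and z: "0 \<le> z"
    and M: "0 \<le> M" "M \<le> 1" "feval c cf (\<lambda>_. 1) * M \<le> 1 / 2"
    and prev: "\<And>i. i \<in> {1..c} \<Longrightarrow> poly (F (h - i)) z \<le> M"
  shows "poly (F h) z \<le> M / 2"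
proof -
  have "poly (F h) z = feval c cf (\<lambda>i. poly (F (h - i)) z)" by (rule F_rec[OF h])
  also have "\<dots> \<le> feval c cf (\<lambda>_. 1) * M\<^sup>2"
    by (rule feval_le_feval_one_mult_square[OF f_nonneg _ M(1,2) monomial_degree_ge_2])
      (use prev poly_nonneg z in auto)
  also have "\<dots> = (feval c cf (\<lambda>_. 1) * M) * M" by (simp add: power2_eq_square)
  also have "\<dots> \<le> M / 2" using mult_right_mono[OF M(3,1)] by simp
  finally show ?thesis .
qed

context
  fixes z t :: real and H :: nat
  assumes z: "0 \<le> z" and t: "0 \<le> t" "t \<le> 1" "feval c cf (\<lambda>_. 1) * t \<le> 1 / 2"
    and window: "\<And>h. H \<le> h \<Longrightarrow> h < H + c \<Longrightarrow> poly (F h) z \<le> t"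
begin

lemma poly_le_window_bound: "H \<le> h \<Longrightarrow> poly (F h) z \<le> t"
proof (induction h rule: less_induct)
  case (less h)
  show ?case
  proof (cases "h < H + c")
    case True
    then show ?thesis using window less.prems by blast
  next
    case False
    have prev: "poly (F (h - i)) z \<le> t" if "i \<in> {1..c}" for i
      using that False by (intro less.IH) auto
    have "c \<le> h" using False by simp
    then have "poly (F h) z \<le> t / 2" by (rule poly_le_half[OF _ z t prev])
    then show ?thesis using t by simp
  qed
qed

lemma poly_le_window_bound_halved: "H + q * c \<le> h \<Longrightarrow> poly (F h) z \<le> t / 2 ^ q"
proof (induction q arbitrary: h)
  case 0
  then show ?case using poly_le_window_bound by simp
next
  case (Suc q)
  have "t / 2 ^ q \<le> t" using divide_left_mono[of 1 "2 ^ q" t] t by simp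
  moreover have "0 \<le> feval c cf (\<lambda>_. 1)" by (rule feval_nonneg[OF f_nonneg]) simp
  ultimately have "feval c cf (\<lambda>_. 1) * (t / 2 ^ q) \<le> 1 / 2"
    using t(3) mult_left_mono by (meson order_trans)
  moreover have "0 \<le> t / 2 ^ q" using t by simp
  moreover have "t / 2 ^ q \<le> 1" using \<open>t / 2 ^ q \<le> t\<close> t(2) by (rule order_trans)
  ultimately have M: "0 \<le> t / 2 ^ q" "t / 2 ^ q \<le> 1" "feval c cf (\<lambda>_. 1) * (t / 2 ^ q) \<le> 1 / 2"
    by auto
  have prev: "poly (F (h - i)) z \<le> t / 2 ^ q" if "i \<in> {1..c}" for i
    using that Suc.prems by (intro Suc.IH) auto
  have "c \<le> h" using Suc.prems by simp
  then have "poly (F h) z \<le> t / 2 ^ q / 2" by (rule poly_le_half[OF _ z M prev])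
  then show ?case by simp
qed

end

text \<open>c consecutive classes without objects of size 0 are uniformly small for z close to 0,
  and from there on the bound halves every c steps.\<close>
lemma poly_geometric_decay:
  assumes "0 < \<epsilon>"
  obtains z H where "0 < z" and "\<And>q h. H + q * c \<le> h \<Longrightarrow> poly (F h) z \<le> \<epsilon> / 2 ^ q"
proof -
  define K where "K = feval c cf (\<lambda>_. 1)"
  have "0 \<le> K" unfolding K_def by (rule feval_nonneg[OF f_nonneg]) simp
  define t where "t = min \<epsilon> (min 1 (1 / (2 * (K + 1))))"
  have t: "0 < t" "t \<le> 1" "t \<le> \<epsilon>"
    using \<open>0 < \<epsilon>\<close> \<open>0 \<le> K\<close> by (auto simp: t_def min_le_iff_disj)
  have "K * t \<le> K * (1 / (2 * (K + 1)))" using \<open>0 \<le> K\<close> by (intro mult_left_mono) (auto simp: t_def)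
  also have "\<dots> \<le> 1 / 2" using \<open>0 \<le> K\<close> by (simp add: field_simps)
  finally have Kt: "K * t \<le> 1 / 2" .
  obtain H where "{h. coeff (F h) 0 \<noteq> 0} \<subseteq> {..<H}"
    using finite_nat_bounded[OF class_fin[of 0]] by blast
  then have H: "poly (F h) 0 = 0" if "H \<le> h" for h
    using that by (force simp: poly_0_coeff_0)
  have "\<forall>\<^sub>F z in at_right 0. \<forall>h\<in>{H..<H + c}. poly (F h) z < t"
  proof (intro eventually_ball_finite ballI)
    fix h assume "h \<in> {H..<H + c}"
    have "(poly (F h) \<longlongrightarrow> poly (F h) 0) (at_right 0)"
      by (rule tendsto_poly[OF tendsto_ident_at])
    then show "\<forall>\<^sub>F z in at_right 0. poly (F h) z < t"
      using H \<open>h \<in> _\<close> t by (intro order_tendstoD(2)) auto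
  qed simp
  then obtain b where "0 < b" and b: "\<And>z. 0 < z \<Longrightarrow> z < b \<Longrightarrow> \<forall>h\<in>{H..<H + c}. poly (F h) z < t"
    by (auto simp: eventually_at_right_field)
  define z where "z = b / 2"
  have "0 < z" "z < b" using \<open>0 < b\<close> by (auto simp: z_def)
  have "poly (F h) z \<le> t / 2 ^ q" if "H + q * c \<le> h" for q h
    by (rule poly_le_window_bound_halved[OF _ _ _ _ _ that])
      (use \<open>0 < z\<close> \<open>z < b\<close> b t Kt in \<open>auto simp: K_def less_imp_le\<close>)
  also have "t / 2 ^ q \<le> \<epsilon> / 2 ^ q" for q using t by (simp add: divide_right_mono)
  finally show thesis using that \<open>0 < z\<close> by blast
qed

lemma poly_eventually_less:
  assumes "0 < \<epsilon>"
  obtains z H where "0 < z" and "\<And>h. H \<le> h \<Longrightarrow> poly (F h) z < \<epsilon>"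
proof -
  obtain z H where "0 < z"
    and decay: "\<And>q h. H + q * c \<le> h \<Longrightarrow> poly (F h) z \<le> \<epsilon> / 2 / 2 ^ q"
    using poly_geometric_decay[of "\<epsilon> / 2"] assms by auto
  have "poly (F h) z < \<epsilon>" if "H \<le> h" for h
    using decay[of 0 h] that assms by simp
  then show thesis using that \<open>0 < z\<close> by blast
qed

lemma card_classes_linear_bound:
  obtains A B where "\<And>n. card {h. coeff (F h) n \<noteq> 0} \<le> A + B * n"
proof -
  obtain z H where "0 < z" and decay: "\<And>q h. H + q * c \<le> h \<Longrightarrow> poly (F h) z \<le> 1 / 2 ^ q"
    using poly_geometric_decay[of 1] by auto
  obtain m where "1 / z < 2 ^ m" using real_arch_pow[of 2 "1 / z"] by auto
  then have "1 / 2 ^ m < z" using \<open>0 < z\<close> by (simp add: field_simps)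
  have bound: "h < H + (m * n + 1) * c" if "coeff (F h) n \<noteq> 0" for h n
  proof (rule ccontr)
    assume "\<not> ?thesis"
    then have "poly (F h) z \<le> 1 / 2 ^ (m * n + 1)" by (intro decay) simp
    moreover have "1 / 2 ^ (m * n) \<le> poly (F h) z"
    proof -
      have "1 / 2 ^ (m * n) = (1 / 2 ^ m :: real) ^ n" by (simp add: power_mult power_one_over)
      also have "\<dots> \<le> z ^ n" using \<open>1 / 2 ^ m < z\<close> by (intro power_mono) auto
      also have "\<dots> \<le> coeff (F h) n * z ^ n" using coeff_ge_1[OF that] \<open>0 < z\<close> by simp
      also have "\<dots> \<le> poly (F h) z"
        by (rule coeff_mult_power_le_poly[OF coeff_nonneg]) (use \<open>0 < z\<close> in simp)
      finally show ?thesis .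
    qed
    moreover have "1 / 2 ^ (m * n + 1) < (1 / 2 ^ (m * n) :: real)"
      by (intro divide_strict_left_mono) auto
    ultimately show False by linarith
  qed
  have "card {h. coeff (F h) n \<noteq> 0} \<le> (H + c) + (m * c) * n" for n
  proof -
    have "{h. coeff (F h) n \<noteq> 0} \<subseteq> {..<H + (m * n + 1) * c}" using bound by auto
    then have "card {h. coeff (F h) n \<noteq> 0} \<le> card {..<H + (m * n + 1) * c}"
      by (rule card_mono[rotated]) simp
    then show ?thesis by (simp add: algebra_simps)
  qed
  then show thesis by (rule that)
qed

end

theorem theorem4:
  fixes c :: nat and cf :: "(nat \<Rightarrow> nat) \<Rightarrow> real" and C :: real
    and F :: "nat \<Rightarrow> real poly" and alpha :: "nat \<Rightarrow> real" and \<alpha> :: real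
    and a :: "nat \<Rightarrow> real"
  assumes c_pos: "c \<ge> 1"
    and f_wf: "mpoly_wf c cf" and f_nonneg: "mpoly_nonneg cf"
    and f_recdep: "recursive_dependent c cf"
    and C_pos: "C > 0" and C_fix: "feval c cf (\<lambda>_. C) = C"
    and F_nat: "\<And>h n. coeff (F h) n \<in> \<nat>"
    and F_nonconst: "\<And>h. degree (F h) > 0"
    and F_rec: "\<And>h z. h \<ge> c \<Longrightarrow> poly (F h) z = feval c cf (\<lambda>i. poly (F (h - i)) z)"
    and class_fin: "\<And>n. finite {h. coeff (F h) n \<noteq> 0}"
    and alpha_pos: "\<And>h. alpha h > 0"
    and alpha_sol: "\<And>h. poly (F h) (alpha h) = C"
    and alpha_lim: "alpha \<longlonglongrightarrow> \<alpha>"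
    and a_def: "\<And>n. a n = (\<Sum>h\<in>{h. coeff (F h) n \<noteq> 0}. coeff (F h) n)"
  shows "\<exists>\<theta> :: nat \<Rightarrow> real. (\<forall>n. a n = inverse \<alpha> ^ n * \<theta> n) \<and>
           (\<forall>\<kappa>::real. \<kappa> > 1 \<longrightarrow> \<theta> \<in> o(\<lambda>n. \<kappa> ^ n))"
proof -
  have "F h \<noteq> 0" for h using F_nonconst[of h] by auto
  then interpret recursive_poly_classes c cf F
    using c_pos f_wf f_nonneg F_nat F_rec class_fin by unfold_locales auto
  obtain z H where "0 < z" and small: "\<And>h. H \<le> h \<Longrightarrow> poly (F h) z < C"
    using poly_eventually_less[OF C_pos] by blast
  have "z < alpha h" if "H \<le> h" for h
    using small[OF that] alpha_sol[of h] poly_mono_of_nonneg_coeffs[OF coeff_nonneg, of "alpha h" z h]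
      alpha_pos[of h] by (force simp: not_less)
  then have "0 < \<alpha>"
    using LIMSEQ_le_const[OF alpha_lim, of z] \<open>0 < z\<close> by force
  obtain A B where card: "\<And>n. card {h. coeff (F h) n \<noteq> 0} \<le> A + B * n"
    using card_classes_linear_bound by blast
  define \<theta> where "\<theta> = (\<lambda>n. a n * \<alpha> ^ n)"
  have "\<theta> \<in> o(\<lambda>n. \<kappa> ^ n)" if "1 < \<kappa>" for \<kappa> :: real
    unfolding \<theta>_def a_def
    using coeff_sum_times_power_smallo[where C = C,
        OF coeff_nonneg card alpha_pos _ alpha_lim \<open>0 < \<alpha>\<close> that] alpha_sol
    by simp
  moreover have "a n = inverse \<alpha> ^ n * \<theta> n" for n
    using \<open>0 < \<alpha>\<close> by (simp add: \<theta>_def power_inverse field_simps)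
  ultimately show ?thesis by blast
qed

end
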